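(* Let $X$ have the $\Gamma(\alpha,1)$ distribution (density $x^{\alpha-1}e^{-x}/\Gamma(\alpha)$, $x\geq 0$), where $\alpha>0$. Then for each fixed $x\geq 0$, $\lim_{s\to+\infty}\overline{T}_{X,s}(x)=e^{-x}$, the limit being over integers $s$.
   Context: For a nonnegative absolutely continuous random variable $X$ with density $f_X$, set $\overline{T}_{X,0}=f_X$, $\mu_{X,0}=1$, and for integers $s\geq 1$ define recursively $\overline{T}_{X,s}(x)=\frac{1}{\mu_{X,s-1}}\int_x^\infty\overline{T}_{X,s-1}(t)\,dt$ and $\mu_{X,s}=\int_0^\infty\overline{T}_{X,s}(t)\,dt$. $\overline{T}_{X,s}$ is the tail (survival function) of the $s$-iterated distribution induced by $X$. *)

theory Defs
  imports "HOL-Analysis.Analysis"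
begin

primrec iter_tail :: "(real \<Rightarrow> real) \<Rightarrow> nat \<Rightarrow> real \<Rightarrow> real" where
  "iter_tail f 0 = f"
| "iter_tail f (Suc s) = (\<lambda>x. (LINT t:{x..}|lborel. iter_tail f s t) /
      (if s = 0 then 1 else (LINT t:{0..}|lborel. iter_tail f s t)))"

definition iter_mean :: "(real \<Rightarrow> real) \<Rightarrow> nat \<Rightarrow> real" where
  "iter_mean f s = (if s = 0 then 1 else (LINT t:{0..}|lborel. iter_tail f s t))"

definition gamma_density :: "real \<Rightarrow> real \<Rightarrow> real" where
  "gamma_density \<alpha> x = (if 0 \<le> x then x powr (\<alpha> - 1) * exp (- x) / Gamma \<alpha> else 0)"

end

theory Submission
  imports Defs "HOL-Real_Asymp.Real_Asymp"
begin

(* For a density f of a nonnegative random variable X with finite moments, Tonelli's theorem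
   gives  int_x^oo E[(X - y)_+^n] dy = E[(X - x)_+^(n+1)] / (n + 1),  so by induction the
   iterated tails are normalised upper partial moments:  T_(n+1)(x) = E[(X - x)_+^n] / E[X^n].
   For the Gamma(alpha, 1) density the substitution t = x + u turns this into
     T_(n+1)(x) = exp (-x) * int_0^oo u^n (u + x)^(alpha - 1) exp (-u) du / Gamma (n + alpha).
   Writing (u + x)^(alpha - 1) = u^(alpha - 1) (1 + x/u)^(alpha - 1) and bounding
   (1 + y)^b between 1 - m y and 1 + 2^m (y + y^m) for |b| <= m, the last ratio lies between
   1 - O(1/n) and 1 + O(1/n), since Gamma (c - k) / Gamma c <= 1 / (c - k). *)

section \<open>Iterated tails and upper partial moments\<close>

definition upper_partial_moment :: "(real \<Rightarrow> real) \<Rightarrow> nat \<Rightarrow> real \<Rightarrow> real" where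
  "upper_partial_moment f n x = (LINT t:{x..}|lborel. (t - x) ^ n * f t)"

lemma nn_integral_power_diff:
  fixes x t :: real
  assumes "x \<le> t"
  shows "(\<integral>\<^sup>+y. ennreal (indicator {x..t} y * (t - y) ^ n) \<partial>lborel) = ennreal ((t - x) ^ Suc n / Suc n)"
proof -
  let ?F = "\<lambda>y. - ((t - y) ^ Suc n / Suc n)"
  have "((\<lambda>y. (t - y) ^ n) has_integral (?F t - ?F x)) {x..t}"
  proof (rule fundamental_theorem_of_calculus[OF assms])
    fix y assume "y \<in> {x..t}"
    have "(?F has_real_derivative (t - y) ^ n) (at y within {x..t})"
      by (auto intro!: derivative_eq_intros simp del: power_Suc)
    then show "(?F has_vector_derivative (t - y) ^ n) (at y within {x..t})"
      by (simp add: has_real_derivative_iff_has_vector_derivative)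
  qed
  then have "((\<lambda>y. (t - y) ^ n) has_integral ((t - x) ^ Suc n / Suc n)) {x..t}"
    by simp
  then show ?thesis
    using nn_integral_has_integral_lebesgue[of "{x..t}" "\<lambda>y. (t - y) ^ n"] assms by simp
qed

lemma nn_integral_upper_partial_moment_iterate:
  fixes f :: "real \<Rightarrow> real"
  assumes [measurable]: "f \<in> borel_measurable borel" and f_nonneg: "\<And>t. 0 \<le> f t"
  shows "(\<integral>\<^sup>+y. ennreal (indicator {x..} y) * (\<integral>\<^sup>+t. ennreal (indicator {y..} t * (t - y) ^ n * f t) \<partial>lborel) \<partial>lborel)
       = (\<integral>\<^sup>+t. ennreal (indicator {x..} t * (t - x) ^ Suc n * f t) \<partial>lborel) * ennreal (1 / Suc n)"
    (is "?lhs = _")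
proof -
  let ?F = "\<lambda>y t. ennreal (indicator {x..} y * indicator {y..} t * (t - y) ^ n * f t)"
  have "?lhs = (\<integral>\<^sup>+y. \<integral>\<^sup>+t. ?F y t \<partial>lborel \<partial>lborel)"
    by (intro nn_integral_cong) (auto simp: indicator_def simp flip: nn_integral_cmult)
  also have "\<dots> = (\<integral>\<^sup>+t. \<integral>\<^sup>+y. ?F y t \<partial>lborel \<partial>lborel)"
  proof -
    have "(\<lambda>(t, y). ?F y t) \<in> borel_measurable (lborel \<Otimes>\<^sub>M lborel)"
      by (simp add: indicator_def case_prod_unfold) measurable
    from lborel_pair.Fubini'[OF this] show ?thesis by simp
  qed
  also have "\<dots> = (\<integral>\<^sup>+t. ennreal (indicator {x..} t * (t - x) ^ Suc n * f t) * ennreal (1 / Suc n) \<partial>lborel)"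
  proof (intro nn_integral_cong)
    fix t :: real
    have "(\<integral>\<^sup>+y. ?F y t \<partial>lborel) = (\<integral>\<^sup>+y. ennreal (indicator {x..t} y * (t - y) ^ n) * ennreal (f t) \<partial>lborel)"
      by (intro nn_integral_cong) (auto simp: indicator_def f_nonneg simp flip: ennreal_mult)
    also have "\<dots> = (\<integral>\<^sup>+y. ennreal (indicator {x..t} y * (t - y) ^ n) \<partial>lborel) * ennreal (f t)"
      by (rule nn_integral_multc) (simp add: indicator_def; measurable)
    also have "\<dots> = ennreal (indicator {x..} t * (t - x) ^ Suc n * f t) * ennreal (1 / Suc n)"
    proof (cases "x \<le> t")
      case True
      then show ?thesis
        by (simp add: nn_integral_power_diff f_nonneg flip: ennreal_mult)
    qed (simp add: indicator_def)
    finally show "(\<integral>\<^sup>+y. ?F y t \<partial>lborel) = \<dots>" .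
  qed
  also have "\<dots> = (\<integral>\<^sup>+t. ennreal (indicator {x..} t * (t - x) ^ Suc n * f t) \<partial>lborel) * ennreal (1 / Suc n)"
    by (rule nn_integral_multc) (simp add: indicator_def; measurable)
  finally show ?thesis .
qed

lemma set_integrable_upper_partial_moment:
  fixes f :: "real \<Rightarrow> real"
  assumes [measurable]: "f \<in> borel_measurable borel" and f_nonneg: "\<And>t. 0 \<le> f t"
    and moment: "set_integrable lborel {0..} (\<lambda>t. t ^ n * f t)" and "0 \<le> x"
  shows "set_integrable lborel {x..} (\<lambda>t. (t - x) ^ n * f t)"
proof (rule set_integrable_bound)
  show "set_integrable lborel {x..} (\<lambda>t. t ^ n * f t)"
    by (rule set_integrable_subset[OF moment]) (use \<open>0 \<le> x\<close> in auto)
  show "set_borel_measurable lborel {x..} (\<lambda>t. (t - x) ^ n * f t)"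
    unfolding set_borel_measurable_def by measurable
  show "AE t in lborel. t \<in> {x..} \<longrightarrow> norm ((t - x) ^ n * f t) \<le> norm (t ^ n * f t)"
    using \<open>0 \<le> x\<close> by (auto simp: abs_mult f_nonneg intro!: mult_right_mono power_mono)
qed

lemma ennreal_upper_partial_moment:
  fixes f :: "real \<Rightarrow> real"
  assumes [measurable]: "f \<in> borel_measurable borel" and f_nonneg: "\<And>t. 0 \<le> f t"
    and "set_integrable lborel {x..} (\<lambda>t. (t - x) ^ n * f t)"
  shows "ennreal (upper_partial_moment f n x) = (\<integral>\<^sup>+t. ennreal (indicator {x..} t * (t - x) ^ n * f t) \<partial>lborel)"
  using assms(3) unfolding upper_partial_moment_def set_lebesgue_integral_def set_integrable_def
  by (subst nn_integral_eq_integral) (auto simp: indicator_def f_nonneg mult.assoc)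

lemma upper_partial_moment_nonneg:
  "(\<And>t. 0 \<le> f t) \<Longrightarrow> 0 \<le> upper_partial_moment f n x"
  unfolding upper_partial_moment_def set_lebesgue_integral_def
  by (intro Bochner_Integration.integral_nonneg) (simp add: indicator_def)

lemma integral_upper_partial_moment:
  fixes f :: "real \<Rightarrow> real"
  assumes [measurable]: "f \<in> borel_measurable borel" and f_nonneg: "\<And>t. 0 \<le> f t"
    and moments: "\<And>n. set_integrable lborel {0..} (\<lambda>t. t ^ n * f t)" and "0 \<le> x"
  shows "(LINT y:{x..}|lborel. upper_partial_moment f n y) = upper_partial_moment f (Suc n) x / Suc n"
proof -
  have [measurable]: "upper_partial_moment f n \<in> borel_measurable borel"
    unfolding upper_partial_moment_def set_lebesgue_integral_def
    by (simp add: indicator_def) measurable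
  have "(LINT y:{x..}|lborel. upper_partial_moment f n y)
      = enn2real (\<integral>\<^sup>+y. ennreal (indicator {x..} y * upper_partial_moment f n y) \<partial>lborel)"
    unfolding set_lebesgue_integral_def
    by (subst integral_eq_nn_integral) (auto simp: upper_partial_moment_nonneg f_nonneg)
  also have "(\<integral>\<^sup>+y. ennreal (indicator {x..} y * upper_partial_moment f n y) \<partial>lborel)
      = (\<integral>\<^sup>+y. ennreal (indicator {x..} y) * (\<integral>\<^sup>+t. ennreal (indicator {y..} t * (t - y) ^ n * f t) \<partial>lborel) \<partial>lborel)"
  proof (intro nn_integral_cong)
    fix y :: real
    show "ennreal (indicator {x..} y * upper_partial_moment f n y)
        = ennreal (indicator {x..} y) * (\<integral>\<^sup>+t. ennreal (indicator {y..} t * (t - y) ^ n * f t) \<partial>lborel)"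
    proof (cases "x \<le> y")
      case True
      then have "set_integrable lborel {y..} (\<lambda>t. (t - y) ^ n * f t)"
        using \<open>0 \<le> x\<close> by (intro set_integrable_upper_partial_moment moments f_nonneg) auto
      with True show ?thesis
        by (simp add: ennreal_upper_partial_moment f_nonneg)
    qed (simp add: indicator_def)
  qed
  also have "\<dots> = ennreal (upper_partial_moment f (Suc n) x) * ennreal (1 / Suc n)"
    using \<open>0 \<le> x\<close>
    by (simp only: nn_integral_upper_partial_moment_iterate f_nonneg
        ennreal_upper_partial_moment set_integrable_upper_partial_moment moments assms(1))
  finally show ?thesis
    by (simp add: enn2real_mult upper_partial_moment_nonneg f_nonneg)
qed

lemma iter_tail_eq_upper_partial_moment_ratio:
  fixes f :: "real \<Rightarrow> real"
  assumes [measurable]: "f \<in> borel_measurable borel" and f_nonneg: "\<And>t. 0 \<le> f t"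
    and moments: "\<And>n. set_integrable lborel {0..} (\<lambda>t. t ^ n * f t)"
    and total: "(LINT t:{0..}|lborel. f t) = 1"
    and moments_pos: "\<And>n. 0 < upper_partial_moment f n 0"
    and "0 \<le> x"
  shows "iter_tail f (Suc n) x = upper_partial_moment f n x / upper_partial_moment f n 0"
  using \<open>0 \<le> x\<close>
proof (induction n arbitrary: x)
  case 0
  then show ?case
    using total by (simp add: upper_partial_moment_def)
next
  case (Suc n)
  let ?M = "upper_partial_moment f"
  have tail_integral: "(LINT y:{z..}|lborel. iter_tail f (Suc n) y) = ?M (Suc n) z / Suc n / ?M n 0"
    if "0 \<le> z" for z
  proof -
    have "(LINT y:{z..}|lborel. iter_tail f (Suc n) y) = (LINT y:{z..}|lborel. ?M n y / ?M n 0)"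
      using Suc.IH that by (intro set_lebesgue_integral_cong) auto
    also have "\<dots> = ?M (Suc n) z / Suc n / ?M n 0"
      using that by (simp add: integral_upper_partial_moment f_nonneg moments)
    finally show ?thesis .
  qed
  have "iter_tail f (Suc (Suc n)) x = (?M (Suc n) x / Suc n / ?M n 0) / (?M (Suc n) 0 / Suc n / ?M n 0)"
    using tail_integral[OF Suc.prems] tail_integral[of 0]
    by (simp only: iter_tail.simps(2)[of f "Suc n"] nat.distinct if_False)
  also have "\<dots> = ?M (Suc n) x / ?M (Suc n) 0"
    using moments_pos[of n] by (simp add: divide_divide_eq_left)
  finally show ?case .
qed

section \<open>The Gamma density\<close>

definition gamma_integrand :: "real \<Rightarrow> real \<Rightarrow> real" where
  "gamma_integrand s u = indicator {0..} u * u powr (s - 1) / exp u"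

lemma gamma_integrand_nonneg: "0 \<le> gamma_integrand s u"
  by (simp add: gamma_integrand_def)

lemma borel_measurable_gamma_integrand [measurable]: "gamma_integrand s \<in> borel_measurable borel"
  unfolding gamma_integrand_def by measurable

lemma nn_integral_gamma_integrand:
  "0 < s \<Longrightarrow> (\<integral>\<^sup>+u. ennreal (gamma_integrand s u) \<partial>lborel) = ennreal (Gamma s)"
  unfolding gamma_integrand_def by (simp add: Gamma_conv_nn_integral_real)

lemma gamma_density_nonneg: "0 < \<alpha> \<Longrightarrow> 0 \<le> gamma_density \<alpha> t"
  unfolding gamma_density_def by auto

lemma borel_measurable_gamma_density [measurable]: "gamma_density \<alpha> \<in> borel_measurable borel"
  unfolding gamma_density_def by measurable

definition shifted_gamma_integral :: "real \<Rightarrow> nat \<Rightarrow> real \<Rightarrow> ennreal" where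
  "shifted_gamma_integral \<alpha> n x =
     (\<integral>\<^sup>+u. ennreal (indicator {0..} u * u ^ n * (u + x) powr (\<alpha> - 1) / exp u) \<partial>lborel)"

lemma nn_integral_gamma_density_shift:
  assumes "0 < \<alpha>" "0 \<le> x"
  shows "(\<integral>\<^sup>+t. ennreal (indicator {x..} t * (t - x) ^ n * gamma_density \<alpha> t) \<partial>lborel)
       = shifted_gamma_integral \<alpha> n x * ennreal (exp (- x) / Gamma \<alpha>)"
proof -
  have "(\<integral>\<^sup>+t. ennreal (indicator {x..} t * (t - x) ^ n * gamma_density \<alpha> t) \<partial>lborel)
      = (\<integral>\<^sup>+u. ennreal (indicator {x..} (x + 1 * u) * ((x + 1 * u) - x) ^ n * gamma_density \<alpha> (x + 1 * u)) \<partial>lborel)"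
    by (subst nn_integral_real_affine[where c = 1 and t = x]) auto
  also have "\<dots> = (\<integral>\<^sup>+u. ennreal (indicator {0..} u * u ^ n * (u + x) powr (\<alpha> - 1) / exp u)
                      * ennreal (exp (- x) / Gamma \<alpha>) \<partial>lborel)"
    using assms
    by (intro nn_integral_cong)
      (auto simp: gamma_density_def indicator_def exp_diff exp_minus field_simps
            simp flip: ennreal_mult')
  also have "\<dots> = shifted_gamma_integral \<alpha> n x * ennreal (exp (- x) / Gamma \<alpha>)"
    unfolding shifted_gamma_integral_def by (rule nn_integral_multc) auto
  finally show ?thesis .
qed

lemma shifted_gamma_integral_zero:
  assumes "0 < \<alpha>"
  shows "shifted_gamma_integral \<alpha> n 0 = ennreal (Gamma (n + \<alpha>))"
proof -
  have "shifted_gamma_integral \<alpha> n 0 = (\<integral>\<^sup>+u. ennreal (gamma_integrand (n + \<alpha>) u) \<partial>lborel)"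
    unfolding shifted_gamma_integral_def gamma_integrand_def
  proof (intro nn_integral_cong)
    fix u :: real
    show "ennreal (indicator {0..} u * u ^ n * (u + 0) powr (\<alpha> - 1) / exp u)
        = ennreal (indicator {0..} u * u powr (n + \<alpha> - 1) / exp u)"
    proof (cases "0 < u")
      case True
      then show ?thesis
        by (simp add: powr_realpow[symmetric] powr_add[symmetric] add_diff_eq mult.assoc)
    qed (auto simp: indicator_def)
  qed
  also have "\<dots> = ennreal (Gamma (n + \<alpha>))"
    using assms by (simp add: nn_integral_gamma_integrand)
  finally show ?thesis .
qed

lemma upper_partial_moment_gamma_density:
  assumes "0 < \<alpha>" "0 \<le> x"
  shows "upper_partial_moment (gamma_density \<alpha>) n x
       = enn2real (shifted_gamma_integral \<alpha> n x) * exp (- x) / Gamma \<alpha>"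
proof -
  have "upper_partial_moment (gamma_density \<alpha>) n x
      = enn2real (\<integral>\<^sup>+t. ennreal (indicator {x..} t * (t - x) ^ n * gamma_density \<alpha> t) \<partial>lborel)"
    unfolding upper_partial_moment_def set_lebesgue_integral_def
    by (subst integral_eq_nn_integral) (auto simp: indicator_def gamma_density_nonneg assms mult.assoc)
  then show ?thesis
    using assms by (simp add: nn_integral_gamma_density_shift enn2real_mult)
qed

lemma gamma_density_moment_integrable:
  assumes "0 < \<alpha>"
  shows "set_integrable lborel {0..} (\<lambda>t. t ^ n * gamma_density \<alpha> t)"
  unfolding set_integrable_def
proof (rule integrableI_nonneg)
  have "(\<integral>\<^sup>+t. ennreal (indicator {0..} t *\<^sub>R (t ^ n * gamma_density \<alpha> t)) \<partial>lborel)
      = ennreal (Gamma (n + \<alpha>)) * ennreal (1 / Gamma \<alpha>)"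
    using nn_integral_gamma_density_shift[OF assms order_refl, of n] assms
    by (simp add: shifted_gamma_integral_zero mult.assoc)
  then show "(\<integral>\<^sup>+t. ennreal (indicator {0..} t *\<^sub>R (t ^ n * gamma_density \<alpha> t)) \<partial>lborel) < \<infinity>"
    by (simp add: ennreal_mult_less_top)
qed (auto simp: gamma_density_nonneg assms indicator_def)

lemma upper_partial_moment_gamma_density_zero:
  "0 < \<alpha> \<Longrightarrow> upper_partial_moment (gamma_density \<alpha>) n 0 = Gamma (n + \<alpha>) / Gamma \<alpha>"
  by (simp add: upper_partial_moment_gamma_density shifted_gamma_integral_zero)

lemma iter_tail_gamma_density:
  assumes "0 < \<alpha>" "0 \<le> x"
  shows "iter_tail (gamma_density \<alpha>) (Suc n) x
       = exp (- x) * (enn2real (shifted_gamma_integral \<alpha> n x) / Gamma (n + \<alpha>))"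
proof -
  have total: "(LINT t:{0..}|lborel. gamma_density \<alpha> t) = 1"
    using upper_partial_moment_gamma_density_zero[OF assms(1), of 0] Gamma_real_pos[OF assms(1)]
    by (simp add: upper_partial_moment_def)
  have "iter_tail (gamma_density \<alpha>) (Suc n) x
      = upper_partial_moment (gamma_density \<alpha>) n x / upper_partial_moment (gamma_density \<alpha>) n 0"
    using assms
    by (intro iter_tail_eq_upper_partial_moment_ratio total gamma_density_moment_integrable)
       (auto simp: gamma_density_nonneg upper_partial_moment_gamma_density_zero)
  also have "\<dots> = exp (- x) * (enn2real (shifted_gamma_integral \<alpha> n x) / Gamma (n + \<alpha>))"
  proof -
    have "Gamma \<alpha> \<noteq> 0" "Gamma (n + \<alpha>) \<noteq> 0"
      using assms by (simp_all add: order.strict_implies_not_eq[symmetric])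
    then show ?thesis
      by (simp only: upper_partial_moment_gamma_density[OF assms]
          upper_partial_moment_gamma_density_zero[OF assms(1)]) (simp add: field_simps)
  qed
  finally show ?thesis .
qed

section \<open>Asymptotics of the shifted Gamma integral\<close>

lemma one_add_power_le_chord:
  fixes y :: real
  assumes "0 \<le> y" "y \<le> 1"
  shows "(1 + y) ^ m \<le> 1 + (2 ^ m - 1) * y"
proof (induction m)
  case (Suc m)
  have "(1 + y) ^ Suc m \<le> (1 + (2 ^ m - 1) * y) * (1 + y)"
    using Suc assms by (simp add: mult_right_mono mult.commute)
  also have "\<dots> = 1 + 2 ^ m * y + (2 ^ m - 1) * (y * y)"
    by (simp add: algebra_simps)
  also have "\<dots> \<le> 1 + 2 ^ m * y + (2 ^ m - 1) * y"
    using assms by (intro add_left_mono mult_left_mono) (auto simp: mult_left_le)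
  finally show ?case by (simp add: algebra_simps)
qed simp

lemma one_add_powr_le:
  fixes y b :: real
  assumes "0 \<le> y" "b \<le> real m"
  shows "(1 + y) powr b \<le> 1 + 2 ^ m * (y + y ^ m)"
proof -
  have "(1 + y) powr b \<le> (1 + y) ^ m"
    using assms powr_mono[of b "real m" "1 + y"] by (simp add: powr_realpow)
  also have "\<dots> \<le> 1 + 2 ^ m * (y + y ^ m)"
  proof (cases "y \<le> 1")
    case True
    then have "(1 + y) ^ m \<le> 1 + (2 ^ m - 1) * y"
      using assms by (intro one_add_power_le_chord)
    also have "\<dots> \<le> 1 + 2 ^ m * (y + y ^ m)"
      using assms by (simp add: algebra_simps)
    finally show ?thesis .
  next
    case False
    then have "(1 + y) ^ m \<le> (2 * y) ^ m"
      by (intro power_mono) auto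
    also have "\<dots> \<le> 1 + 2 ^ m * (y + y ^ m)"
      using assms by (simp add: algebra_simps)
    finally show ?thesis .
  qed
  finally show ?thesis .
qed

lemma one_le_powr_add:
  fixes y b :: real
  assumes "0 \<le> y" "- b \<le> real m"
  shows "1 \<le> (1 + y) powr b + real m * y"
proof -
  have "1 + real m * (- y / (1 + y)) \<le> (1 + (- y / (1 + y))) ^ m"
    using assms by (intro Bernoulli_inequality) (simp add: field_simps)
  also have "(1 + (- y / (1 + y))) ^ m = (1 + y) powr (- real m)"
    using assms by (simp add: powr_minus powr_realpow field_simps)
  also have "\<dots> \<le> (1 + y) powr b"
    using assms by (intro powr_mono) auto
  finally have "1 - real m * (y / (1 + y)) \<le> (1 + y) powr b"
    by simp
  moreover have "real m * (y / (1 + y)) \<le> real m * y"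
    using assms by (intro mult_left_mono) (auto simp: field_simps)
  ultimately show ?thesis by simp
qed

lemma powr_mult_powr_add_eq:
  fixes u x a b :: real
  assumes "0 < u" "0 \<le> x"
  shows "u powr a * (u + x) powr b = u powr (a + b) * (1 + x / u) powr b"
  using assms by (simp add: powr_add powr_mult[symmetric] distrib_left)

lemma powr_mult_powr_add_le:
  fixes u x a b :: real
  assumes "0 < u" "0 \<le> x" "b \<le> real m"
  shows "u powr a * (u + x) powr b
    \<le> u powr (a + b) + 2 ^ m * x * u powr (a + b - 1) + 2 ^ m * x ^ m * u powr (a + b - m)"
proof -
  have "u powr a * (u + x) powr b = u powr (a + b) * (1 + x / u) powr b"
    using assms(1,2) by (rule powr_mult_powr_add_eq)
  also have "\<dots> \<le> u powr (a + b) * (1 + 2 ^ m * (x / u + (x / u) ^ m))"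
    using assms by (intro mult_left_mono one_add_powr_le) auto
  also have "\<dots> = u powr (a + b) + 2 ^ m * x * u powr (a + b - 1) + 2 ^ m * x ^ m * u powr (a + b - m)"
    using assms by (simp add: powr_diff powr_realpow field_simps)
  finally show ?thesis .
qed

lemma powr_add_le_powr_mult_powr:
  fixes u x a b :: real
  assumes "0 < u" "0 \<le> x" "- b \<le> real m"
  shows "u powr (a + b) \<le> u powr a * (u + x) powr b + real m * x * u powr (a + b - 1)"
proof -
  have "u powr (a + b) \<le> u powr (a + b) * ((1 + x / u) powr b + real m * (x / u))"
    using assms one_le_powr_add[of "x / u" b m] by (intro mult_le_cancel_left1[THEN iffD2]) auto
  also have "\<dots> = u powr a * (u + x) powr b + real m * x * u powr (a + b - 1)"
    using assms by (simp add: powr_mult_powr_add_eq powr_diff field_simps)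
  finally show ?thesis .
qed

lemma shifted_gamma_integrand_le:
  fixes u x \<alpha> :: real
  assumes "0 \<le> x" "1 \<le> n" "\<alpha> - 1 \<le> real m"
  shows "indicator {0..} u * u ^ n * (u + x) powr (\<alpha> - 1) / exp u
    \<le> gamma_integrand (n + \<alpha>) u + 2 ^ m * x * gamma_integrand (n + \<alpha> - 1) u
       + 2 ^ m * x ^ m * gamma_integrand (n + \<alpha> - m) u"
proof (cases "0 < u")
  case True
  have exponents: "n + (\<alpha> - 1) = n + \<alpha> - 1" "n + (\<alpha> - 1) - 1 = n + \<alpha> - 1 - 1"
    "n + \<alpha> - 1 - m = n + \<alpha> - m - 1"
    by simp_all
  have "u powr n * (u + x) powr (\<alpha> - 1)
      \<le> u powr (n + \<alpha> - 1) + 2 ^ m * x * u powr (n + \<alpha> - 1 - 1) + 2 ^ m * x ^ m * u powr (n + \<alpha> - m - 1)"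
    using powr_mult_powr_add_le[OF True assms(1,3), of n] by (simp only: exponents)
  then have "u powr n * (u + x) powr (\<alpha> - 1) / exp u
      \<le> (u powr (n + \<alpha> - 1) + 2 ^ m * x * u powr (n + \<alpha> - 1 - 1) + 2 ^ m * x ^ m * u powr (n + \<alpha> - m - 1)) / exp u"
    by (rule divide_right_mono) simp
  with True show ?thesis
    by (simp add: gamma_integrand_def powr_realpow add_divide_distrib)
next
  case False
  then show ?thesis
    using assms by (cases "u = 0") (auto simp: gamma_integrand_def indicator_def power_0_left)
qed

lemma shifted_gamma_integrand_ge:
  fixes u x \<alpha> :: real
  assumes "0 \<le> x" "1 - \<alpha> \<le> real m"
  shows "gamma_integrand (n + \<alpha>) u
    \<le> indicator {0..} u * u ^ n * (u + x) powr (\<alpha> - 1) / exp u + m * x * gamma_integrand (n + \<alpha> - 1) u"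
proof (cases "0 < u")
  case True
  have exponents: "n + (\<alpha> - 1) = n + \<alpha> - 1" "n + (\<alpha> - 1) - 1 = n + \<alpha> - 1 - 1"
    by simp_all
  have "u powr (n + \<alpha> - 1) \<le> u powr n * (u + x) powr (\<alpha> - 1) + m * x * u powr (n + \<alpha> - 1 - 1)"
    using powr_add_le_powr_mult_powr[OF True assms(1), of "\<alpha> - 1" m n] assms(2)
    by (simp only: exponents)
  then have "u powr (n + \<alpha> - 1) / exp u
      \<le> (u powr n * (u + x) powr (\<alpha> - 1) + m * x * u powr (n + \<alpha> - 1 - 1)) / exp u"
    by (rule divide_right_mono) simp
  with True show ?thesis
    by (simp add: gamma_integrand_def powr_realpow add_divide_distrib)
qed (auto simp: gamma_integrand_def indicator_def)

lemma shifted_gamma_integral_le: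
  assumes "0 < \<alpha>" "0 \<le> x" "1 \<le> m" "m \<le> n" "\<alpha> - 1 \<le> real m"
  shows "shifted_gamma_integral \<alpha> n x
    \<le> ennreal (Gamma (n + \<alpha>) + 2 ^ m * x * Gamma (n + \<alpha> - 1) + 2 ^ m * x ^ m * Gamma (n + \<alpha> - m))"
proof -
  let ?G = "\<lambda>s u. ennreal (gamma_integrand s u)"
  have "shifted_gamma_integral \<alpha> n x
      \<le> (\<integral>\<^sup>+u. ?G (n + \<alpha>) u + ennreal (2 ^ m * x) * ?G (n + \<alpha> - 1) u
                 + ennreal (2 ^ m * x ^ m) * ?G (n + \<alpha> - m) u \<partial>lborel)"
    unfolding shifted_gamma_integral_def
  proof (rule nn_integral_mono)
    fix u :: real
    have "ennreal (indicator {0..} u * u ^ n * (u + x) powr (\<alpha> - 1) / exp u)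
        \<le> ennreal (gamma_integrand (n + \<alpha>) u + 2 ^ m * x * gamma_integrand (n + \<alpha> - 1) u
                   + 2 ^ m * x ^ m * gamma_integrand (n + \<alpha> - m) u)"
      using assms by (intro ennreal_leI shifted_gamma_integrand_le) auto
    also have "\<dots> = ?G (n + \<alpha>) u + ennreal (2 ^ m * x) * ?G (n + \<alpha> - 1) u
                   + ennreal (2 ^ m * x ^ m) * ?G (n + \<alpha> - m) u"
      using assms by (simp add: gamma_integrand_nonneg flip: ennreal_plus ennreal_mult)
    finally show "ennreal (indicator {0..} u * u ^ n * (u + x) powr (\<alpha> - 1) / exp u) \<le> \<dots>" .
  qed
  also have "\<dots> = ennreal (Gamma (n + \<alpha>)) + ennreal (2 ^ m * x) * ennreal (Gamma (n + \<alpha> - 1))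
                   + ennreal (2 ^ m * x ^ m) * ennreal (Gamma (n + \<alpha> - m))"
    using assms by (simp add: nn_integral_add nn_integral_cmult nn_integral_gamma_integrand)
  also have "\<dots> = ennreal (Gamma (n + \<alpha>) + 2 ^ m * x * Gamma (n + \<alpha> - 1) + 2 ^ m * x ^ m * Gamma (n + \<alpha> - m))"
    using assms by (simp flip: ennreal_plus ennreal_mult)
  finally show ?thesis .
qed

lemma shifted_gamma_integral_ge:
  assumes "0 < \<alpha>" "0 \<le> x" "1 \<le> n" "1 - \<alpha> \<le> real m"
  shows "ennreal (Gamma (n + \<alpha>)) \<le> shifted_gamma_integral \<alpha> n x + ennreal (m * x * Gamma (n + \<alpha> - 1))"
proof -
  have "ennreal (Gamma (n + \<alpha>)) = (\<integral>\<^sup>+u. ennreal (gamma_integrand (n + \<alpha>) u) \<partial>lborel)"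
    using assms by (simp add: nn_integral_gamma_integrand)
  also have "\<dots> \<le> (\<integral>\<^sup>+u. ennreal (indicator {0..} u * u ^ n * (u + x) powr (\<alpha> - 1) / exp u)
                     + ennreal (m * x) * ennreal (gamma_integrand (n + \<alpha> - 1) u) \<partial>lborel)"
  proof (rule nn_integral_mono)
    fix u :: real
    have "ennreal (gamma_integrand (n + \<alpha>) u)
        \<le> ennreal (indicator {0..} u * u ^ n * (u + x) powr (\<alpha> - 1) / exp u + m * x * gamma_integrand (n + \<alpha> - 1) u)"
      using assms by (intro ennreal_leI shifted_gamma_integrand_ge) auto
    also have "\<dots> = ennreal (indicator {0..} u * u ^ n * (u + x) powr (\<alpha> - 1) / exp u)
                   + ennreal (m * x) * ennreal (gamma_integrand (n + \<alpha> - 1) u)"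
      using assms by (simp add: indicator_def gamma_integrand_nonneg flip: ennreal_plus ennreal_mult)
    finally show "ennreal (gamma_integrand (n + \<alpha>) u) \<le> \<dots>" .
  qed
  also have "\<dots> = shifted_gamma_integral \<alpha> n x + ennreal (m * x * Gamma (n + \<alpha> - 1))"
    using assms unfolding shifted_gamma_integral_def
    by (simp add: nn_integral_add nn_integral_cmult nn_integral_gamma_integrand flip: ennreal_mult)
  finally show ?thesis .
qed

lemma Gamma_diff_div_Gamma_le:
  fixes c :: real and m :: nat
  assumes "1 \<le> m" "1 \<le> c - m"
  shows "Gamma (c - m) / Gamma c \<le> 1 / (c - m)"
proof -
  define z where "z = c - m"
  obtain k where m: "m = Suc k"
    using assms(1) by (cases m) auto
  have z: "1 \<le> z" "z \<notin> \<int>\<^sub>\<le>\<^sub>0"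
    using assms by (auto simp: z_def elim!: nonpos_Ints_cases)
  have Gamma_z: "0 < Gamma z"
    using z by simp
  have "z + m = c"
    by (simp add: z_def)
  then have "Gamma c = pochhammer z m * Gamma z"
    using pochhammer_Gamma[OF z(2), of m] Gamma_z by (simp add: field_simps)
  also have "pochhammer z m = z * pochhammer (z + 1) k"
    by (simp add: m pochhammer_rec)
  finally have "z * Gamma z \<le> Gamma c"
    using z Gamma_z by (auto intro!: mult_right_mono prod_ge_1 simp: pochhammer_prod)
  moreover have "0 < Gamma c"
    using assms by simp
  ultimately show ?thesis
    using z Gamma_z by (simp add: z_def[symmetric] field_simps)
qed

lemma shifted_gamma_integral_ratio_le:
  assumes "0 < \<alpha>" "0 \<le> x" "1 \<le> m" "m < n" "\<alpha> - 1 \<le> real m"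
  shows "enn2real (shifted_gamma_integral \<alpha> n x) / Gamma (n + \<alpha>)
    \<le> 1 + 2 ^ m * x / (n + \<alpha> - 1) + 2 ^ m * x ^ m / (n + \<alpha> - m)"
proof -
  define c where "c = n + \<alpha>"
  have c: "1 \<le> c - 1" "1 \<le> c - m" "0 < Gamma c"
    using assms by (auto simp: c_def)
  have "enn2real (shifted_gamma_integral \<alpha> n x)
      \<le> Gamma c + 2 ^ m * x * Gamma (c - 1) + 2 ^ m * x ^ m * Gamma (c - m)"
    using assms c unfolding c_def by (intro enn2real_leI shifted_gamma_integral_le) auto
  then have "enn2real (shifted_gamma_integral \<alpha> n x) / Gamma c
      \<le> (Gamma c + 2 ^ m * x * Gamma (c - 1) + 2 ^ m * x ^ m * Gamma (c - m)) / Gamma c"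
    using c(3) by (intro divide_right_mono) auto
  also have "\<dots> = 1 + 2 ^ m * x * (Gamma (c - 1) / Gamma c) + 2 ^ m * x ^ m * (Gamma (c - m) / Gamma c)"
    using c(3) by (simp add: add_divide_distrib)
  also have "\<dots> \<le> 1 + 2 ^ m * x * (1 / (c - 1)) + 2 ^ m * x ^ m * (1 / (c - m))"
    using Gamma_diff_div_Gamma_le[of 1 c] Gamma_diff_div_Gamma_le[of m c] c assms
    by (intro add_mono mult_left_mono) auto
  finally show ?thesis
    by (simp add: c_def)
qed

lemma shifted_gamma_integral_ratio_ge:
  assumes "0 < \<alpha>" "0 \<le> x" "1 \<le> m" "m < n" "\<bar>\<alpha> - 1\<bar> \<le> real m"
  shows "1 - m * x / (n + \<alpha> - 1) \<le> enn2real (shifted_gamma_integral \<alpha> n x) / Gamma (n + \<alpha>)"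
proof -
  define c where "c = n + \<alpha>"
  define S where "S = enn2real (shifted_gamma_integral \<alpha> n x)"
  have c: "1 \<le> c - 1" "0 < Gamma c"
    using assms by (auto simp: c_def)
  have "shifted_gamma_integral \<alpha> n x < \<infinity>"
    using assms by (intro le_less_trans[OF shifted_gamma_integral_le[of \<alpha> x m n]]) auto
  then have S_eq: "shifted_gamma_integral \<alpha> n x = ennreal S" and S_nonneg: "0 \<le> S"
    by (simp_all add: S_def)
  have "ennreal (Gamma c) \<le> ennreal (S + m * x * Gamma (c - 1))"
    using shifted_gamma_integral_ge[of \<alpha> x n m] assms c S_nonneg
    by (simp add: S_eq c_def flip: ennreal_plus)
  then have "Gamma c \<le> S + m * x * Gamma (c - 1)"
    by (subst (asm) ennreal_le_iff) (use assms c S_nonneg in auto)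
  then have "1 \<le> (S + m * x * Gamma (c - 1)) / Gamma c"
    using c(2) by (subst le_divide_eq_1_pos) auto
  then have "1 \<le> S / Gamma c + m * x * (Gamma (c - 1) / Gamma c)"
    by (simp add: add_divide_distrib)
  moreover have "1 - m * x / (c - 1) \<le> 1 - m * x * (Gamma (c - 1) / Gamma c)"
    using Gamma_diff_div_Gamma_le[of 1 c] c assms by (simp add: mult_left_mono divide_inverse)
  ultimately show ?thesis
    by (simp add: S_def c_def)
qed

lemma shifted_gamma_integral_ratio_tendsto:
  fixes \<alpha> x :: real
  assumes "0 < \<alpha>" "0 \<le> x"
  shows "(\<lambda>n. enn2real (shifted_gamma_integral \<alpha> n x) / Gamma (n + \<alpha>)) \<longlonglongrightarrow> 1"
proof -
  define m where "m = nat \<lceil>\<bar>\<alpha> - 1\<bar>\<rceil> + 1"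
  have m: "1 \<le> m" "\<bar>\<alpha> - 1\<bar> \<le> real m" "\<alpha> - 1 \<le> real m"
    unfolding m_def by linarith+
  show ?thesis
  proof (rule tendsto_sandwich)
    show "\<forall>\<^sub>F n in sequentially. 1 - m * x / (n + \<alpha> - 1)
        \<le> enn2real (shifted_gamma_integral \<alpha> n x) / Gamma (n + \<alpha>)"
      using eventually_gt_at_top[of m]
      by eventually_elim (rule shifted_gamma_integral_ratio_ge[OF assms m(1) _ m(2)])
    show "\<forall>\<^sub>F n in sequentially. enn2real (shifted_gamma_integral \<alpha> n x) / Gamma (n + \<alpha>)
        \<le> 1 + 2 ^ m * x / (n + \<alpha> - 1) + 2 ^ m * x ^ m / (n + \<alpha> - m)"
      using eventually_gt_at_top[of m]
      by eventually_elim (rule shifted_gamma_integral_ratio_le[OF assms m(1) _ m(3)])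
    show "(\<lambda>n. 1 - m * x / (real n + \<alpha> - 1)) \<longlonglongrightarrow> 1"
      by real_asymp
    show "(\<lambda>n. 1 + 2 ^ m * x / (real n + \<alpha> - 1) + 2 ^ m * x ^ m / (real n + \<alpha> - m)) \<longlonglongrightarrow> 1"
      by real_asymp
  qed
qed

theorem theorem5:
  fixes \<alpha> x :: real
  assumes "\<alpha> > 0" and "x \<ge> 0"
  shows "(\<lambda>s. iter_tail (gamma_density \<alpha>) s x) \<longlonglongrightarrow> exp (- x)"
proof (rule LIMSEQ_imp_Suc)
  have "(\<lambda>n. exp (- x) * (enn2real (shifted_gamma_integral \<alpha> n x) / Gamma (n + \<alpha>)))
      \<longlonglongrightarrow> exp (- x) * 1"
    using shifted_gamma_integral_ratio_tendsto[OF assms] by (rule tendsto_mult_left)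
  then show "(\<lambda>n. iter_tail (gamma_density \<alpha>) (Suc n) x) \<longlonglongrightarrow> exp (- x)"
    by (simp only: iter_tail_gamma_density[OF assms] mult_1_right)
qed

end
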